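(* Let $S$ be a Clifford semigroup which is a strong semilattice of groups $\{G_y: y\in Y\}$ over a finite semilattice $Y$. If $S$ is left fairly amenable, then at least one of the groups $G_y$ is amenable.
   Context: A strong semilattice of groups over a semilattice $Y$ is the disjoint union $S=\bigcup_{y\in Y}G_y$ of groups, together with group homomorphisms $\phi_{y,z}:G_y\to G_z$ for $y\ge z$ (with $\phi_{y,y}$ the identity and $\phi_{z,w}\phi_{y,z}=\phi_{y,w}$), and product $ab=\phi_{y,y\wedge z}(a)\phi_{z,y\wedge z}(b)$ for $a\in G_y$, $b\in G_z$. $s$ acts injectively on the left of $A\subseteq S$ if $a\mapsto sa$ is injective on $A$. $S$ is left fairly amenable if there is $\mu:\mathcal P(S)\to[0,1]$, $\mu(S)=1$, additive on disjoint sets, with $\mu(sA)=\mu(A)$ whenever $s$ acts injectively on the left of $A$. A group $G$ is amenable if it admits a finitely-additive probability measure with $\mu(gA)=\mu(A)$ for all $g\in G$, $A\subseteq G$. *)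

theory Defs
  imports Complex_Main "HOL-Algebra.Group"
begin

definition left_fairly_amenable :: "'a set \<Rightarrow> ('a \<Rightarrow> 'a \<Rightarrow> 'a) \<Rightarrow> bool" where
  "left_fairly_amenable S op \<longleftrightarrow>
     (\<exists>\<mu> :: 'a set \<Rightarrow> real.
        (\<forall>A. A \<subseteq> S \<longrightarrow> 0 \<le> \<mu> A \<and> \<mu> A \<le> 1) \<and>
        \<mu> S = 1 \<and>
        (\<forall>A B. A \<subseteq> S \<longrightarrow> B \<subseteq> S \<longrightarrow> A \<inter> B = {} \<longrightarrow> \<mu> (A \<union> B) = \<mu> A + \<mu> B) \<and>
        (\<forall>s A. s \<in> S \<longrightarrow> A \<subseteq> S \<longrightarrow> inj_on (op s) A \<longrightarrow> \<mu> (op s ` A) = \<mu> A))"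

definition amenable_group :: "('g, 'b) monoid_scheme \<Rightarrow> bool" where
  "amenable_group G \<longleftrightarrow>
     (\<exists>\<mu> :: 'g set \<Rightarrow> real.
        (\<forall>A. A \<subseteq> carrier G \<longrightarrow> 0 \<le> \<mu> A \<and> \<mu> A \<le> 1) \<and>
        \<mu> (carrier G) = 1 \<and>
        (\<forall>A B. A \<subseteq> carrier G \<longrightarrow> B \<subseteq> carrier G \<longrightarrow> A \<inter> B = {} \<longrightarrow>
               \<mu> (A \<union> B) = \<mu> A + \<mu> B) \<and>
        (\<forall>g A. g \<in> carrier G \<longrightarrow> A \<subseteq> carrier G \<longrightarrow>
               \<mu> ((\<lambda>a. g \<otimes>\<^bsub>G\<^esub> a) ` A) = \<mu> A))"

definition strong_semilattice_of_groups ::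
  "('y::semilattice_inf \<Rightarrow> ('g, 'b) monoid_scheme) \<Rightarrow> ('y \<Rightarrow> 'y \<Rightarrow> 'g \<Rightarrow> 'g) \<Rightarrow> bool" where
  "strong_semilattice_of_groups G \<phi> \<longleftrightarrow>
     (\<forall>y. group (G y)) \<and>
     (\<forall>y z. z \<le> y \<longrightarrow> \<phi> y z \<in> hom (G y) (G z)) \<and>
     (\<forall>y a. a \<in> carrier (G y) \<longrightarrow> \<phi> y y a = a) \<and>
     (\<forall>y z w a. w \<le> z \<longrightarrow> z \<le> y \<longrightarrow> a \<in> carrier (G y) \<longrightarrow>
        \<phi> z w (\<phi> y z a) = \<phi> y w a)"

definition ssl_carrier :: "('y \<Rightarrow> ('g, 'b) monoid_scheme) \<Rightarrow> ('y \<times> 'g) set" where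
  "ssl_carrier G = (SIGMA y:UNIV. carrier (G y))"

definition ssl_mult ::
  "('y::semilattice_inf \<Rightarrow> ('g, 'b) monoid_scheme) \<Rightarrow> ('y \<Rightarrow> 'y \<Rightarrow> 'g \<Rightarrow> 'g) \<Rightarrow>
   'y \<times> 'g \<Rightarrow> 'y \<times> 'g \<Rightarrow> 'y \<times> 'g" where
  "ssl_mult G \<phi> p q =
     (let y = fst p; z = fst q; m = inf y z
      in (m, \<phi> y m (snd p) \<otimes>\<^bsub>G m\<^esub> \<phi> z m (snd q)))"

end

theory Submission
  imports Defs
begin

(* Let mu witness left fair amenability of S = \<Union>y. G_y.  The layers
   {y} \<times> G_y partition S and there are finitely many of them, so by finite
   additivity their measures sum to mu S = 1 and some layer G_y has positive
   measure.  For g \<in> G_y, left multiplication by (y, g) maps the layer G_y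
   injectively onto itself and acts there as the group translation by g, so
   mu restricted to that layer is translation invariant; dividing by the mass
   of the layer yields an invariant finitely additive probability on G_y. *)

locale finitely_additive =
  fixes S :: "'a set" and \<mu> :: "'a set \<Rightarrow> real"
  assumes nonneg: "A \<subseteq> S \<Longrightarrow> 0 \<le> \<mu> A"
    and additive: "A \<subseteq> S \<Longrightarrow> B \<subseteq> S \<Longrightarrow> A \<inter> B = {} \<Longrightarrow> \<mu> (A \<union> B) = \<mu> A + \<mu> B"
begin

lemma measure_empty: "\<mu> {} = 0"
proof -
  have "\<mu> {} = \<mu> {} + \<mu> {}"
    using additive[of "{}" "{}"] by simp
  then show ?thesis by linarith
qed

lemma mono:
  assumes "A \<subseteq> B" "B \<subseteq> S"
  shows "\<mu> A \<le> \<mu> B"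
proof -
  have "\<mu> B = \<mu> (A \<union> (B - A))"
    using assms(1) by (simp add: Un_absorb1)
  also have "\<dots> = \<mu> A + \<mu> (B - A)"
    using assms by (intro additive) auto
  finally show ?thesis
    using nonneg[of "B - A"] assms(2) by auto
qed

lemma finite_union:
  assumes "finite I" "\<And>i. i \<in> I \<Longrightarrow> T i \<subseteq> S"
    and "\<And>i j. i \<in> I \<Longrightarrow> j \<in> I \<Longrightarrow> i \<noteq> j \<Longrightarrow> T i \<inter> T j = {}"
  shows "\<mu> (\<Union>i\<in>I. T i) = (\<Sum>i\<in>I. \<mu> (T i))"
  using assms
proof (induction I rule: finite_induct)
  case empty
  then show ?case by (simp add: measure_empty)
next
  case (insert x I)
  have "\<mu> (T x \<union> (\<Union>i\<in>I. T i)) = \<mu> (T x) + \<mu> (\<Union>i\<in>I. T i)"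
    using insert.prems insert.hyps(2) by (intro additive) blast+
  then show ?case
    using insert by simp
qed

lemma positive_piece:
  assumes "finite I" "S = (\<Union>i\<in>I. T i)" "0 < \<mu> S"
    and "\<And>i j. i \<in> I \<Longrightarrow> j \<in> I \<Longrightarrow> i \<noteq> j \<Longrightarrow> T i \<inter> T j = {}"
  obtains i where "i \<in> I" "0 < \<mu> (T i)"
proof -
  have sub: "T i \<subseteq> S" if "i \<in> I" for i
    using assms(2) that by blast
  have "(\<Sum>i\<in>I. \<mu> (T i)) = \<mu> S"
    using finite_union[OF assms(1) sub assms(4)] assms(2) by simp
  with assms(3) have "\<not> (\<forall>i\<in>I. \<mu> (T i) = 0)"
    by (metis less_irrefl sum.neutral)
  then obtain i where "i \<in> I" "\<mu> (T i) \<noteq> 0"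
    by blast
  with nonneg[OF sub] show ?thesis
    using that by force
qed

end

lemma left_fairly_amenableE:
  assumes "left_fairly_amenable S op"
  obtains \<mu> where "finitely_additive S \<mu>" "\<mu> S = 1"
    "\<And>s A. s \<in> S \<Longrightarrow> A \<subseteq> S \<Longrightarrow> inj_on (op s) A \<Longrightarrow> \<mu> (op s ` A) = \<mu> A"
  using assms unfolding left_fairly_amenable_def
proof (elim exE conjE)
  fix \<mu> :: "'a set \<Rightarrow> real"
  assume bounded: "\<forall>A. A \<subseteq> S \<longrightarrow> 0 \<le> \<mu> A \<and> \<mu> A \<le> 1" and total: "\<mu> S = 1"
    and additive: "\<forall>A B. A \<subseteq> S \<longrightarrow> B \<subseteq> S \<longrightarrow> A \<inter> B = {} \<longrightarrow> \<mu> (A \<union> B) = \<mu> A + \<mu> B"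
    and invariant: "\<forall>s A. s \<in> S \<longrightarrow> A \<subseteq> S \<longrightarrow> inj_on (op s) A \<longrightarrow> \<mu> (op s ` A) = \<mu> A"
  have "finitely_additive S \<mu>"
    using bounded additive by unfold_locales simp_all
  then show thesis
    using total by (rule that) (simp add: invariant)
qed

text \<open>If a finitely additive measure gives positive mass to an injective copy
  e(G) of the carrier of G inside S and is invariant under left translations
  transported along e, then normalising it on e(G) shows that G is amenable.\<close>

lemma amenable_group_from_invariant_copy:
  fixes G :: "('g, 'b) monoid_scheme" and e :: "'g \<Rightarrow> 'a"
  assumes "finitely_additive S \<mu>"
    and copy: "e ` carrier G \<subseteq> S" "inj_on e (carrier G)"
    and pos: "0 < \<mu> (e ` carrier G)"
    and invariant: "\<And>g A. g \<in> carrier G \<Longrightarrow> A \<subseteq> carrier G \<Longrightarrow>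
                       \<mu> (e ` ((\<lambda>a. g \<otimes>\<^bsub>G\<^esub> a) ` A)) = \<mu> (e ` A)"
  shows "amenable_group G"
proof -
  interpret finitely_additive S \<mu> by fact
  define \<nu> where "\<nu> A = \<mu> (e ` A) / \<mu> (e ` carrier G)" for A
  have in_S: "e ` A \<subseteq> S" if "A \<subseteq> carrier G" for A
    using that copy(1) by blast
  have bounds: "0 \<le> \<nu> A \<and> \<nu> A \<le> 1" if "A \<subseteq> carrier G" for A
    using nonneg[OF in_S[OF that]] mono[of "e ` A" "e ` carrier G"] that copy(1) pos
    unfolding \<nu>_def by (auto simp: image_mono)
  have additive_\<nu>: "\<nu> (A \<union> B) = \<nu> A + \<nu> B"
    if "A \<subseteq> carrier G" "B \<subseteq> carrier G" "A \<inter> B = {}" for A B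
  proof -
    have "e ` A \<inter> e ` B = {}"
      using that copy(2) unfolding inj_on_def by blast
    then have "\<mu> (e ` A \<union> e ` B) = \<mu> (e ` A) + \<mu> (e ` B)"
      using that by (intro additive in_S)
    then show ?thesis
      unfolding \<nu>_def by (simp add: image_Un add_divide_distrib)
  qed
  have "\<nu> (carrier G) = 1"
    using pos unfolding \<nu>_def by simp
  moreover have "\<nu> ((\<lambda>a. g \<otimes>\<^bsub>G\<^esub> a) ` A) = \<nu> A" if "g \<in> carrier G" "A \<subseteq> carrier G" for g A
    using invariant[OF that] unfolding \<nu>_def by simp
  ultimately show ?thesis
    unfolding amenable_group_def using bounds additive_\<nu> by blast
qed

definition layer :: "('y \<Rightarrow> ('g, 'b) monoid_scheme) \<Rightarrow> 'y \<Rightarrow> ('y \<times> 'g) set" where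
  "layer G y = Pair y ` carrier (G y)"

lemma ssl_carrier_layers: "ssl_carrier G = (\<Union>y\<in>UNIV. layer G y)"
  unfolding ssl_carrier_def layer_def by auto

lemma layers_disjoint: "y \<noteq> z \<Longrightarrow> layer G y \<inter> layer G z = {}"
  unfolding layer_def by auto

text \<open>Inside one layer the semigroup product is the group product, because
  the structure map from y to y is the identity.\<close>

lemma ssl_mult_within_layer:
  assumes "strong_semilattice_of_groups G \<phi>"
    and "a \<in> carrier (G y)" "b \<in> carrier (G y)"
  shows "ssl_mult G \<phi> (y, a) (y, b) = (y, a \<otimes>\<^bsub>G y\<^esub> b)"
proof -
  have "\<phi> y y a = a" "\<phi> y y b = b"
    using assms unfolding strong_semilattice_of_groups_def by blast+
  then show ?thesis
    unfolding ssl_mult_def Let_def by simp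
qed

lemma ssl_left_translation_on_layer:
  assumes ssl: "strong_semilattice_of_groups G \<phi>"
    and g: "g \<in> carrier (G y)" and A: "A \<subseteq> carrier (G y)"
  shows "ssl_mult G \<phi> (y, g) ` Pair y ` A = Pair y ` (\<lambda>a. g \<otimes>\<^bsub>G y\<^esub> a) ` A"
    and "inj_on (ssl_mult G \<phi> (y, g)) (Pair y ` A)"
proof -
  interpret group "G y"
    using ssl unfolding strong_semilattice_of_groups_def by simp
  have prod: "ssl_mult G \<phi> (y, g) (y, a) = (y, g \<otimes>\<^bsub>G y\<^esub> a)" if "a \<in> A" for a
    using ssl_mult_within_layer[OF ssl g, of a] that A by blast
  show "ssl_mult G \<phi> (y, g) ` Pair y ` A = Pair y ` (\<lambda>a. g \<otimes>\<^bsub>G y\<^esub> a) ` A"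
    unfolding image_image using prod by (rule image_cong[OF refl])
  show "inj_on (ssl_mult G \<phi> (y, g)) (Pair y ` A)"
  proof (rule inj_onI)
    fix p q assume p: "p \<in> Pair y ` A" and q: "q \<in> Pair y ` A"
      and eq: "ssl_mult G \<phi> (y, g) p = ssl_mult G \<phi> (y, g) q"
    obtain a b where ab: "p = (y, a)" "q = (y, b)" "a \<in> A" "b \<in> A"
      using p q by (auto simp: image_iff)
    then have "g \<otimes>\<^bsub>G y\<^esub> a = g \<otimes>\<^bsub>G y\<^esub> b"
      using eq prod by simp
    moreover have "a \<in> carrier (G y)" "b \<in> carrier (G y)"
      using ab(3,4) A by auto
    ultimately have "a = b"
      using g by simp
    then show "p = q"
      using ab by simp
  qed
qed

theorem mainTheorem15:
  fixes G :: "'y::{semilattice_inf, finite} \<Rightarrow> ('g, 'b) monoid_scheme"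
    and \<phi> :: "'y \<Rightarrow> 'y \<Rightarrow> 'g \<Rightarrow> 'g"
  assumes "strong_semilattice_of_groups G \<phi>"
    and "left_fairly_amenable (ssl_carrier G) (ssl_mult G \<phi>)"
  shows "\<exists>y. amenable_group (G y)"
proof -
  let ?S = "ssl_carrier G" and ?mult = "ssl_mult G \<phi>"
  obtain \<mu> where fa: "finitely_additive ?S \<mu>" and total: "\<mu> ?S = 1"
    and invariant: "\<And>s A. s \<in> ?S \<Longrightarrow> A \<subseteq> ?S \<Longrightarrow> inj_on (?mult s) A \<Longrightarrow> \<mu> (?mult s ` A) = \<mu> A"
    using assms(2) by (rule left_fairly_amenableE) (rule that)
  obtain y where pos: "0 < \<mu> (layer G y)"
    using finitely_additive.positive_piece[OF fa finite_UNIV ssl_carrier_layers _ layers_disjoint] total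
    by auto
  have "amenable_group (G y)"
  proof (rule amenable_group_from_invariant_copy[OF fa])
    show "Pair y ` carrier (G y) \<subseteq> ?S" "inj_on (Pair y) (carrier (G y))"
      unfolding ssl_carrier_def by (auto simp: inj_on_def)
    show "0 < \<mu> (Pair y ` carrier (G y))"
      using pos by (simp add: layer_def)
    fix g A assume g: "g \<in> carrier (G y)" and A: "A \<subseteq> carrier (G y)"
    have "(y, g) \<in> ?S" "Pair y ` A \<subseteq> ?S"
      using g A unfolding ssl_carrier_def by auto
    then have "\<mu> (?mult (y, g) ` Pair y ` A) = \<mu> (Pair y ` A)"
      using ssl_left_translation_on_layer(2)[OF assms(1) g A] by (rule invariant)
    then show "\<mu> (Pair y ` (\<lambda>a. g \<otimes>\<^bsub>G y\<^esub> a) ` A) = \<mu> (Pair y ` A)"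
      by (simp only: ssl_left_translation_on_layer(1)[OF assms(1) g A])
  qed
  then show ?thesis ..
qed

end
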